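(* Let $B\in\mathbb{R}^{n\times n}$ be a nonsingular $M$-matrix and $C\in\mathbb{R}^{n\times n}$ an $M$-matrix such that $B^{-1}C\ge 0$, and suppose that $B-C-I$ is a nonsingular $M$-matrix. Let $\Phi$ be the maximal nonpositive solvent of $X^2+BX+C=0$ and $\Psi$ the maximal nonpositive solvent of the dual equation $CY^2+BY+I=0$. Set $X_0=E_0=-B^{-1}C$ and $Y_0=F_0=-B^{-1}$, and for $i=0,1,2,\dots$ define $E_{i+1}=E_i(I-Y_iX_i)^{-1}E_i$, $F_{i+1}=F_i(I-X_iY_i)^{-1}F_i$, $X_{i+1}=X_i+F_i(I-X_iY_i)^{-1}X_iE_i$, $Y_{i+1}=Y_i+E_i(I-Y_iX_i)^{-1}Y_iF_i$. Then these sequences are well-defined (all inverses exist), and for every $k\ge 1$: (a) $E_k=(I-Y_k\Phi)\Phi^{2^k}\ge 0$; (b) $F_k=(I-X_k\Psi)\Psi^{2^k}\ge 0$; (c) $I-X_kY_k$ and $I-Y_kX_k$ are nonsingular $M$-matrices; (d) $\Phi\le X_k\le X_{k-1}\le 0$, $\Psi\le Y_k\le Y_{k-1}\le 0$, and $0\le X_k-\Phi\le \Psi^{2^k}(-\Phi)\Phi^{2^k}$, $0\le Y_k-\Psi\le \Phi^{2^k}(-\Psi)\Psi^{2^k}$.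
   Context: Inequalities between matrices are entrywise; a matrix is nonpositive if all its entries are $\le 0$. A solvent of a matrix equation is a matrix solution; the maximal nonpositive solvent is a nonpositive solvent $\Phi$ with $X\le\Phi$ entrywise for every nonpositive solvent $X$ (these exist for both equations under the stated hypotheses). A $Z$-matrix is a real square matrix with nonpositive off-diagonal entries; a $Z$-matrix $A=sI-N$ with $N\ge 0$ is an $M$-matrix if $s\ge\rho(N)$ and a nonsingular $M$-matrix if $s>\rho(N)$, where $\rho$ is the spectral radius. *)

theory Defs
  imports "HOL-Analysis.Analysis"
begin

text \<open>Square real matrices are \<open>real^'n^'n\<close>; the order \<open>\<le>\<close> on them is entrywise
(library instance on vec), \<open>0\<close> is the zero matrix, \<open>**\<close> the matrix product,
\<open>mat 1\<close> the identity.\<close>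

definition cmat :: "real^'n^'n \<Rightarrow> complex^'n^'n" where
  "cmat A = (\<chi> i j. complex_of_real (A $ i $ j))"

definition spec_rad :: "real^'n^'n \<Rightarrow> real" where
  "spec_rad A = Max {cmod l | l. \<exists>v. v \<noteq> 0 \<and> cmat A *v v = l *s v}"

text \<open>Matrix power (note: \<open>^\<close> on vec would be entrywise).\<close>
definition mpow :: "real^'n^'n \<Rightarrow> nat \<Rightarrow> real^'n^'n" where
  "mpow A k = ((\<lambda>M. A ** M) ^^ k) (mat 1)"

definition Z_matrix :: "real^'n^'n \<Rightarrow> bool" where
  "Z_matrix A \<longleftrightarrow> (\<forall>i j. i \<noteq> j \<longrightarrow> A $ i $ j \<le> 0)"

definition M_matrix :: "real^'n^'n \<Rightarrow> bool" where
  "M_matrix A \<longleftrightarrow> (\<exists>s N. 0 \<le> N \<and> A = s *\<^sub>R mat 1 - N \<and> s \<ge> spec_rad N)"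

definition nonsing_M_matrix :: "real^'n^'n \<Rightarrow> bool" where
  "nonsing_M_matrix A \<longleftrightarrow> (\<exists>s N. 0 \<le> N \<and> A = s *\<^sub>R mat 1 - N \<and> s > spec_rad N)"

definition max_nonpos_solvent :: "real^'n^'n \<Rightarrow> real^'n^'n \<Rightarrow> real^'n^'n \<Rightarrow> bool" where
  "max_nonpos_solvent B C P \<longleftrightarrow>
     P \<le> 0 \<and> P ** P + B ** P + C = 0 \<and>
     (\<forall>X. X \<le> 0 \<and> X ** X + B ** X + C = 0 \<longrightarrow> X \<le> P)"

definition max_nonpos_dual_solvent :: "real^'n^'n \<Rightarrow> real^'n^'n \<Rightarrow> real^'n^'n \<Rightarrow> bool" where
  "max_nonpos_dual_solvent B C P \<longleftrightarrow>
     P \<le> 0 \<and> C ** P ** P + B ** P + mat 1 = 0 \<and>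
     (\<forall>Y. Y \<le> 0 \<and> C ** Y ** Y + B ** Y + mat 1 = 0 \<longrightarrow> Y \<le> P)"

end

theory Submission
  imports Defs "HOL-Computational_Algebra.Fundamental_Theorem_Algebra"
begin

text \<open>
  The doubling iterates are tied to the two solvents by
  \<open>E\<^sub>k = (I - Y\<^sub>k \<Phi>) \<Phi>^(2^k)\<close>, \<open>F\<^sub>k = (I - X\<^sub>k \<Psi>) \<Psi>^(2^k)\<close>,
  \<open>X\<^sub>k - \<Phi> = F\<^sub>k (-\<Phi>) \<Phi>^(2^k)\<close> and \<open>Y\<^sub>k - \<Psi> = E\<^sub>k (-\<Psi>) \<Psi>^(2^k)\<close>;
  these pass from \<open>k\<close> to \<open>k + 1\<close> by pure algebra once \<open>I - X\<^sub>k Y\<^sub>k\<close> and \<open>I - Y\<^sub>k X\<^sub>k\<close>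
  are invertible. Invertibility, with nonnegative inverses, comes from one positive vector \<open>u\<close>
  with \<open>(-\<Phi>) u < u\<close> and \<open>(-\<Psi>) u < u\<close>: for \<open>\<Phi> \<le> X \<le> 0\<close>, \<open>\<Psi> \<le> Y \<le> 0\<close> it gives
  \<open>X Y u < u\<close>, so \<open>I - X Y\<close> is a nonsingular M-matrix. Take for \<open>u\<close> the positive vector with
  \<open>(B - C - I) u > 0\<close>; then \<open>w = B\<^sup>-\<^sup>1 (C + I) u < u\<close>, and \<open>(-\<Phi>) u \<le> w\<close> because the
  maximal solvent \<open>\<Phi>\<close> dominates the nonpositive limit \<open>P\<close> of the monotone iteration
  \<open>Z \<mapsto> -B\<^sup>-\<^sup>1 (C + Z\<^sup>2)\<close>, which satisfies \<open>(-P) u \<le> w\<close>; likewise for \<open>\<Psi>\<close>.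
  Signs then propagate: \<open>E\<^sub>k, F\<^sub>k \<ge> 0\<close> for \<open>k \<ge> 1\<close>, the corrections added to \<open>X\<^sub>k\<close> and
  \<open>Y\<^sub>k\<close> are nonpositive, and the error identities give \<open>X\<^sub>k \<ge> \<Phi>\<close>, \<open>Y\<^sub>k \<ge> \<Psi>\<close>.

  The M-matrix facts are derived from the spectral-radius definition: a positive \<open>v\<close> with
  \<open>N v < t v\<close> forces \<open>\<rho>(N) < t\<close> (Collatz--Wielandt), and conversely such a \<open>v\<close> exists
  whenever \<open>\<rho>(N) < t\<close>.
\<close>

section \<open>Spectrum and spectral radius\<close>

(* Needed only to see that the spectrum is finite and nonempty, so that the Max in spec_rad is a
   genuine maximum. *)
definition char_poly :: "'a::comm_ring_1^'n^'n \<Rightarrow> 'a poly" where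
  "char_poly A = (\<Sum>p | p permutes (UNIV::'n set). smult (of_int (sign p))
      (\<Prod>i\<in>UNIV. [:A$i$p i, - (if p i = i then 1 else 0):]))"

lemma poly_char_poly: "poly (char_poly A) l = det (A - mat l)"
  unfolding char_poly_def det_def poly_sum poly_smult poly_prod
  by (intro sum.cong refl arg_cong2[where f="(*)"] prod.cong) (auto simp: mat_def)

lemma coeff_char_poly_card: "coeff (char_poly (A::'a::idom^'n^'n)) CARD('n) = (-1)^CARD('n)"
proof -
  define f where "f p = (\<Prod>i\<in>(UNIV::'n set). [:A$i$p i, - (if p i = i then 1 else 0):])" for p
  have "coeff (f p) CARD('n) = 0" if "p \<noteq> id" for p
  proof -
    obtain j where "p j \<noteq> j" using \<open>p \<noteq> id\<close> by (auto simp: fun_eq_iff)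
    have "degree (f p) \<le> (\<Sum>i\<in>UNIV. degree [:A$i$p i, - (if p i = i then 1 else 0):])"
      unfolding f_def
      using degree_prod_sum_le[OF finite_class.finite_UNIV,
          of "\<lambda>i. [:A$i$p i, - (if p i = i then 1 else 0):]"]
      unfolding o_def .
    also have "\<dots> < (\<Sum>i\<in>(UNIV::'n set). 1)"
      by (rule sum_strict_mono_ex1) (use \<open>p j \<noteq> j\<close> in \<open>auto intro: bexI[of _ j]\<close>)
    finally show ?thesis by (simp add: coeff_eq_0)
  qed
  then have "coeff (char_poly A) CARD('n) = coeff (f id) CARD('n)"
    unfolding char_poly_def coeff_sum coeff_smult f_def[symmetric]
    by (subst sum.remove[of _ id]) (auto intro!: sum.neutral)
  also have "\<dots> = (-1)^CARD('n)"
  proof -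
    have "degree (f id) = CARD('n)"
      unfolding f_def by (subst degree_prod_sum_eq) auto
    moreover have "lead_coeff (f id) = (-1)^CARD('n)"
      unfolding f_def by (simp add: lead_coeff_prod)
    ultimately show ?thesis by simp
  qed
  finally show ?thesis .
qed

lemma matrix_vector_mult_mat: "(mat (l::'a::comm_ring_1) :: 'a^'n^'n) *v x = l *s x"
proof -
  have "(\<Sum>j\<in>UNIV. (if i = j then l else 0) * x$j) = l * x$i" for i
    by (simp add: if_distrib[where f="\<lambda>a. a * _"] cong: if_cong)
  then show ?thesis by (simp add: vec_eq_iff matrix_vector_mult_def mat_def)
qed

lemma eigenvalue_iff_char_poly_root:
  fixes A :: "'a::field^'n^'n"
  shows "(\<exists>v. v \<noteq> 0 \<and> A *v v = l *s v) \<longleftrightarrow> poly (char_poly A) l = 0"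
proof -
  have "poly (char_poly A) l = 0 \<longleftrightarrow> \<not> invertible (A - mat l)"
    by (simp add: poly_char_poly invertible_det_nz)
  also have "\<dots> \<longleftrightarrow> \<not> (\<forall>x. (A - mat l) *v x = 0 \<longrightarrow> x = 0)"
    by (simp add: invertible_left_inverse matrix_left_invertible_ker)
  also have "\<dots> \<longleftrightarrow> (\<exists>v. v \<noteq> 0 \<and> A *v v = l *s v)"
    by (auto simp: matrix_vector_mult_diff_rdistrib matrix_vector_mult_mat)
  finally show ?thesis by simp
qed

lemma finite_eigenvalues: "finite {l. \<exists>v. v \<noteq> 0 \<and> (A::'a::field^'n^'n) *v v = l *s v}"
proof -
  have "char_poly A \<noteq> 0" using coeff_char_poly_card[of A] by auto
  then show ?thesis
    using poly_roots_finite by (simp add: eigenvalue_iff_char_poly_root)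
qed

lemma eigenvalue_exists: "\<exists>l v. v \<noteq> 0 \<and> (A::complex^'n^'n) *v v = l *s v"
proof -
  have "degree (char_poly A) \<ge> CARD('n)"
    using coeff_char_poly_card[of A] by (intro le_degree) auto
  moreover have "CARD('n) > 0" by simp
  ultimately have "degree (char_poly A) \<noteq> 0" by linarith
  then have "\<not> constant (poly (char_poly A))"
    by (simp add: constant_degree)
  then obtain l where "poly (char_poly A) l = 0"
    using fundamental_theorem_of_algebra by blast
  then show ?thesis using eigenvalue_iff_char_poly_root by blast
qed

lemma spec_rad_eq_Max: "spec_rad A = Max (cmod ` {l. \<exists>v. v \<noteq> 0 \<and> cmat A *v v = l *s v})"
  unfolding spec_rad_def by (simp only: image_Collect)

lemma eigenvalue_le_spec_rad: "v \<noteq> 0 \<Longrightarrow> cmat A *v v = l *s v \<Longrightarrow> cmod l \<le> spec_rad A"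
  unfolding spec_rad_eq_Max by (intro Max_ge) (auto intro: finite_eigenvalues)

lemma spec_rad_nonneg: "0 \<le> spec_rad A"
  using eigenvalue_exists[of "cmat A"] eigenvalue_le_spec_rad norm_ge_zero order_trans by metis

lemma spec_rad_less_iff:
  "spec_rad A < s \<longleftrightarrow> (\<forall>l v. v \<noteq> 0 \<longrightarrow> cmat A *v v = l *s v \<longrightarrow> cmod l < s)"
  unfolding spec_rad_eq_Max using eigenvalue_exists[of "cmat A"]
  by (subst Max_less_iff) (auto intro: finite_eigenvalues)

lemma real_eigenvalue_le_spec_rad:
  fixes N :: "real^'n^'n"
  assumes "w \<noteq> 0" "N *v w = t *s w"
  shows "\<bar>t\<bar> \<le> spec_rad N"
proof -
  define cw where "cw = (\<chi> i. complex_of_real (w$i))"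
  have "cw \<noteq> 0" using assms(1) by (auto simp: cw_def vec_eq_iff)
  moreover have "cmat N *v cw = complex_of_real t *s cw"
    using assms(2)
    by (simp add: vec_eq_iff matrix_vector_mult_def cmat_def cw_def flip: of_real_mult of_real_sum)
  ultimately show ?thesis using eigenvalue_le_spec_rad by fastforce
qed

lemma matrix_le_iff: "(A::'a::order^'n^'m) \<le> B \<longleftrightarrow> (\<forall>i j. A$i$j \<le> B$i$j)"
  by (simp add: less_eq_vec_def)

lemma matrix_matrix_mult_nth: "(A ** B)$i$j = (\<Sum>k\<in>UNIV. A$i$k * B$k$j)"
  by (simp add: matrix_matrix_mult_def)

lemma matrix_vector_mult_nth: "(A *v x)$i = (\<Sum>j\<in>UNIV. A$i$j * x$j)"
  by (simp add: matrix_vector_mult_def)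

lemma matrix_mul_uminus_left: "(- A) ** (B::'a::ring_1^'n^'m) = - (A ** B)"
  by (simp add: vec_eq_iff matrix_matrix_mult_nth sum_negf)

lemma matrix_mul_uminus_right: "(A::'a::ring_1^'n^'m) ** (- B) = - (A ** B)"
  by (simp add: vec_eq_iff matrix_matrix_mult_nth sum_negf)

lemma matrix_add_rdistrib: "((A::'a::semiring_1^'n^'m) + B) ** C = A ** C + B ** C"
  by (simp add: vec_eq_iff matrix_matrix_mult_nth sum.distrib distrib_right)

lemma matrix_diff_rdistrib: "((A::'a::ring_1^'n^'m) - B) ** C = A ** C - B ** C"
  by (simp add: vec_eq_iff matrix_matrix_mult_nth sum_subtractf left_diff_distrib)

lemma matrix_diff_ldistrib: "(A::'a::ring_1^'n^'m) ** (B - C) = A ** B - A ** C"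
  by (simp add: vec_eq_iff matrix_matrix_mult_nth sum_subtractf right_diff_distrib)

lemmas matrix_mul_algebra = matrix_mul_uminus_left matrix_mul_uminus_right matrix_add_ldistrib
  matrix_add_rdistrib matrix_diff_ldistrib matrix_diff_rdistrib matrix_mul_assoc

lemma matrix_mul_nonneg: "0 \<le> (A::real^'n^'m) \<Longrightarrow> 0 \<le> B \<Longrightarrow> 0 \<le> A ** B"
  unfolding matrix_le_iff matrix_matrix_mult_nth by (auto intro!: sum_nonneg)

lemma matrix_mul_nonpos_nonpos: "(A::real^'n^'m) \<le> 0 \<Longrightarrow> B \<le> 0 \<Longrightarrow> 0 \<le> A ** B"
  unfolding matrix_le_iff matrix_matrix_mult_nth by (auto intro!: sum_nonneg mult_nonpos_nonpos)

lemma matrix_mul_mono: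
  "0 \<le> (A::real^'n^'m) \<Longrightarrow> A \<le> A' \<Longrightarrow> 0 \<le> B \<Longrightarrow> B \<le> B' \<Longrightarrow> A ** B \<le> A' ** B'"
  unfolding matrix_le_iff matrix_matrix_mult_nth
  by (auto intro!: sum_mono mult_mono) (meson order_trans)

lemma matrix_mul_left_mono: "0 \<le> (P::real^'n^'m) \<Longrightarrow> A \<le> A' \<Longrightarrow> P ** A \<le> P ** A'"
  unfolding matrix_le_iff matrix_matrix_mult_nth by (auto intro!: sum_mono mult_left_mono)

lemma matrix_vector_mult_nonneg: "0 \<le> (A::real^'n^'m) \<Longrightarrow> 0 \<le> x \<Longrightarrow> 0 \<le> A *v x"
  unfolding matrix_le_iff less_eq_vec_def matrix_vector_mult_nth by (auto intro!: sum_nonneg)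

lemma matrix_vector_mult_left_mono: "0 \<le> (P::real^'n^'m) \<Longrightarrow> x \<le> y \<Longrightarrow> P *v x \<le> P *v y"
  unfolding matrix_le_iff less_eq_vec_def matrix_vector_mult_nth
  by (auto intro!: sum_mono mult_left_mono)

lemma matrix_vector_mult_right_mono: "0 \<le> (x::real^'n) \<Longrightarrow> A \<le> A' \<Longrightarrow> A *v x \<le> A' *v x"
  unfolding matrix_le_iff less_eq_vec_def matrix_vector_mult_nth
  by (auto intro!: sum_mono mult_right_mono)

lemma matrix_le_if_diff_nonneg: "0 \<le> B - A \<Longrightarrow> (A::real^'n^'m) \<le> B"
  by (simp add: matrix_le_iff)

lemma mat_one_nonneg: "0 \<le> (mat 1 :: real^'n^'n)"
  by (simp add: matrix_le_iff mat_def)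

lemma scaled_id_minus_mult_nth: "((t *\<^sub>R mat 1 - N) *v x)$i = t * x$i - (N *v x)$i"
  for N :: "real^'n^'n"
  by (simp add: matrix_vector_mult_diff_rdistrib flip: scaleR_matrix_vector_assoc)

lemma matrix_inv_props: "invertible A \<Longrightarrow> A ** matrix_inv A = mat 1 \<and> matrix_inv A ** A = mat 1"
  unfolding matrix_inv_def invertible_def by (rule someI_ex)

lemma matrix_inv_right: "invertible A \<Longrightarrow> A ** matrix_inv A = mat 1"
  and matrix_inv_left: "invertible A \<Longrightarrow> matrix_inv A ** A = mat 1"
  by (simp_all add: matrix_inv_props)

lemma ex_argmax_finite_type: "\<exists>i0::'n::finite. \<forall>j. f j \<le> (f i0::'a::linorder)"
proof -
  have "Max (range f) \<in> range f" by (rule Max_in) auto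
  then obtain i0 where "Max (range f) = f i0" by blast
  moreover have "f j \<le> Max (range f)" for j by (rule Max_ge) auto
  ultimately show ?thesis by metis
qed

section \<open>Nonsingular M-matrices\<close>

lemma scaled_id_minus_monotone:
  fixes N :: "real^'n^'n"
  assumes N: "0 \<le> N" and v: "\<forall>i. 0 < v$i" and Nv: "\<forall>i. (N *v v)$i < t * v$i"
    and Ax: "0 \<le> (t *\<^sub>R mat 1 - N) *v x"
  shows "0 \<le> x"
proof (rule ccontr)
  \<comment> \<open>At the index where \<open>x\<^sub>i / v\<^sub>i\<close> is smallest, \<open>(N x)\<^sub>i \<le> t x\<^sub>i\<close> contradicts \<open>N v < t v\<close>.\<close>
  assume "\<not> 0 \<le> x"
  then obtain i where "x$i < 0" by (auto simp: less_eq_vec_def not_le)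
  obtain i0 where i0: "\<forall>j. - x$j / v$j \<le> - x$i0 / v$i0"
    using ex_argmax_finite_type[of "\<lambda>j. - x$j / v$j"] by blast
  define c where "c = - x$i0 / v$i0"
  have "0 < - x$i / v$i" using \<open>x$i < 0\<close> v by (simp add: divide_neg_pos)
  then have c: "0 < c" using i0 c_def by (meson less_le_trans)
  have x_ge: "- c * v$j \<le> x$j" for j
  proof -
    have "(- x$j) / v$j \<le> c" using i0 c_def by blast
    then have "- x$j \<le> c * v$j" by (subst (asm) pos_divide_le_eq) (use v in auto)
    then show ?thesis by simp
  qed
  have x_i0: "x$i0 = - c * v$i0" using v[rule_format, of i0] by (simp add: c_def)
  have "- c * (N *v v)$i0 = (\<Sum>j\<in>UNIV. N$i0$j * (- c * v$j))"
    by (simp add: matrix_vector_mult_nth sum_distrib_left algebra_simps)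
  also have "\<dots> \<le> (N *v x)$i0"
    unfolding matrix_vector_mult_nth
    using N x_ge by (intro sum_mono mult_left_mono) (auto simp: matrix_le_iff)
  also have "\<dots> \<le> t * x$i0"
    using Ax by (auto simp: less_eq_vec_def scaled_id_minus_mult_nth)
  finally have "c * (t * v$i0) \<le> c * (N *v v)$i0" using x_i0 by (simp add: algebra_simps)
  then show False using c Nv by (meson mult_le_cancel_left_pos not_le)
qed

lemma scaled_id_minus_inverse_nonneg:
  fixes N :: "real^'n^'n"
  assumes N: "0 \<le> N" and v: "\<forall>i. 0 < v$i" and Nv: "\<forall>i. (N *v v)$i < t * v$i"
  shows "invertible (t *\<^sub>R mat 1 - N)" and "0 \<le> matrix_inv (t *\<^sub>R mat 1 - N)"
proof -
  let ?A = "t *\<^sub>R mat 1 - N"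
  note monotone = scaled_id_minus_monotone[OF N v Nv]
  have "x = 0" if "?A *v x = 0" for x
    using monotone[of x] monotone[of "- x"] that by (simp add: vec.neg)
  then show inv: "invertible ?A"
    by (simp add: invertible_left_inverse matrix_left_invertible_ker)
  have "0 \<le> matrix_inv ?A $ i $ j" for i j
  proof -
    have "0 \<le> ?A *v (matrix_inv ?A *v axis j 1)"
      by (simp add: matrix_vector_mul_assoc matrix_inv_right[OF inv] less_eq_vec_def axis_def)
    then have "0 \<le> matrix_inv ?A *v axis j 1"
      by (rule monotone)
    then show ?thesis
      unfolding matrix_vector_mult_basis column_def by (simp add: less_eq_vec_def)
  qed
  then show "0 \<le> matrix_inv ?A" by (simp add: matrix_le_iff)
qed

lemma spec_rad_less_if_subinvariant:
  fixes N :: "real^'n^'n"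
  assumes N: "0 \<le> N" and v: "\<forall>i. 0 < v$i" and Nv: "\<forall>i. (N *v v)$i < t * v$i"
  shows "spec_rad N < t"
  unfolding spec_rad_less_iff
proof (intro allI impI)
  fix l and w :: "complex^'n"
  assume "w \<noteq> 0" and eigen: "cmat N *v w = l *s w"
  obtain i0 where i0: "\<forall>j. cmod (w$j) / v$j \<le> cmod (w$i0) / v$i0"
    using ex_argmax_finite_type[of "\<lambda>j. cmod (w$j) / v$j"] by blast
  define c where "c = cmod (w$i0) / v$i0"
  obtain i where "w$i \<noteq> 0" using \<open>w \<noteq> 0\<close> by (auto simp: vec_eq_iff)
  then have "0 < cmod (w$i) / v$i" using v by simp
  then have c: "0 < c" using i0 c_def by (meson less_le_trans)
  have w_le: "cmod (w$j) \<le> c * v$j" for j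
  proof -
    have "cmod (w$j) / v$j \<le> c" using i0 c_def by blast
    then show ?thesis using v[rule_format, of j] by (simp add: divide_le_eq)
  qed
  have w_i0: "cmod (w$i0) = c * v$i0" using v[rule_format, of i0] by (simp add: c_def)
  have "l * w$i0 = (\<Sum>j\<in>UNIV. complex_of_real (N$i0$j) * w$j)"
    using arg_cong[OF eigen, of "\<lambda>u. u$i0"] by (simp add: matrix_vector_mult_def cmat_def)
  then have "cmod l * cmod (w$i0) = cmod (\<Sum>j\<in>UNIV. complex_of_real (N$i0$j) * w$j)"
    by (metis norm_mult)
  also have "\<dots> \<le> (\<Sum>j\<in>UNIV. cmod (complex_of_real (N$i0$j) * w$j))"
    by (rule norm_sum)
  also have "\<dots> = (\<Sum>j\<in>UNIV. N$i0$j * cmod (w$j))"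
    using N by (intro sum.cong refl) (auto simp: norm_mult matrix_le_iff)
  also have "\<dots> \<le> (\<Sum>j\<in>UNIV. N$i0$j * (c * v$j))"
    using N w_le by (intro sum_mono mult_left_mono) (auto simp: matrix_le_iff)
  also have "\<dots> = c * (N *v v)$i0"
    by (simp add: matrix_vector_mult_nth sum_distrib_left algebra_simps)
  also have "\<dots> < t * cmod (w$i0)"
    using c Nv w_i0 by simp
  finally have "cmod l * cmod (w$i0) < t * cmod (w$i0)" .
  moreover have "0 < cmod (w$i0)"
    using c v w_i0 by simp
  ultimately show "cmod l < t" by simp
qed

lemma subinvariant_slack:
  fixes N :: "real^'n^'n"
  assumes v: "\<forall>i. 0 < v$i" and Nv: "\<forall>i. (N *v v)$i < t * v$i"
  shows "\<exists>e>0. \<forall>i. (N *v v)$i < (t - e) * v$i"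
proof -
  define r where "r i = (t * v$i - (N *v v)$i) / v$i" for i
  obtain i1 where i1: "\<forall>j. - r j \<le> - r i1"
    using ex_argmax_finite_type[of "\<lambda>j. - r j"] by blast
  have "0 < r i1" using v Nv by (simp add: r_def)
  moreover have "(N *v v)$j < (t - r i1 / 2) * v$j" for j
  proof -
    have "(N *v v)$j = t * v$j - r j * v$j"
      using v[rule_format, of j] by (simp add: r_def)
    also have "\<dots> \<le> t * v$j - r i1 * v$j"
      using i1 v by (simp add: mult_right_mono)
    also have "\<dots> < (t - r i1 / 2) * v$j"
      using \<open>0 < r i1\<close> v by (simp add: algebra_simps)
    finally show ?thesis .
  qed
  ultimately show ?thesis by (intro exI[of _ "r i1 / 2"]) auto
qed

text \<open>
  If \<open>K\<close> inverts \<open>A\<close> and every perturbation \<open>A + h I\<close>, \<open>h > 0\<close>, has a nonnegative solution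
  \<open>y\<close> of \<open>(A + h I) y = b\<close>, then \<open>K b \<ge> 0\<close>: from \<open>y = K b - h K y\<close> the solutions stay
  bounded and converge to \<open>K b\<close> as \<open>h \<rightarrow> 0\<close>.
\<close>

lemma inverse_apply_nonneg_if_perturbed_nonneg:
  fixes A K :: "real^'n^'n"
  assumes K: "K ** A = mat 1"
    and perturbed: "\<And>h. 0 < h \<Longrightarrow> \<exists>y. 0 \<le> y \<and> A *v y + h *\<^sub>R y = b"
  shows "0 \<le> K *v b"
proof -
  define z where "z = K *v b"
  obtain \<beta> where \<beta>: "0 < \<beta>" "\<And>x. norm (K *v x) \<le> norm x * \<beta>"
    using bounded_linear.pos_bounded[OF matrix_vector_mul_bounded_linear[of K]] by blast
  have close: "- (2 * h * \<beta> * norm z) \<le> z$i" if "0 < h" "h * \<beta> \<le> 1/2" for h i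
  proof -
    obtain y where y: "0 \<le> y" "A *v y + h *\<^sub>R y = b" using perturbed \<open>0 < h\<close> by blast
    have z_eq: "z = y + h *\<^sub>R (K *v y)"
      using y(2) K
      by (auto simp: z_def matrix_vector_right_distrib matrix_vector_mult_scaleR
          matrix_vector_mul_assoc)
    have hKy: "norm (h *\<^sub>R (K *v y)) \<le> h * \<beta> * norm y"
      using \<beta>(2)[of y] \<open>0 < h\<close> by (simp add: mult_left_mono algebra_simps)
    have "norm y \<le> norm z + norm (h *\<^sub>R (K *v y))"
      using z_eq norm_triangle_ineq4[of z "h *\<^sub>R (K *v y)"] by simp
    also have "\<dots> \<le> norm z + norm y / 2"
      using hKy mult_right_mono[OF that(2) norm_ge_zero[of y]] by linarith
    finally have y_bound: "norm y \<le> 2 * norm z" by linarith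
    have "- (h * (K *v y)$i) \<le> norm (h *\<^sub>R (K *v y))"
      using component_le_norm_cart[of "h *\<^sub>R (K *v y)" i] by simp
    also have "\<dots> \<le> h * \<beta> * (2 * norm z)"
      using hKy y_bound \<open>0 < h\<close> \<beta>(1) by (smt (verit) mult_left_mono mult_pos_pos)
    finally have "- (2 * h * \<beta> * norm z) \<le> h * (K *v y)$i" by simp
    also have "\<dots> \<le> z$i"
      using z_eq y(1) by (simp add: less_eq_vec_def)
    finally show ?thesis .
  qed
  have "0 \<le> z$i" for i
  proof (rule tendsto_upperbound)
    show "((\<lambda>h. - (2 * h * \<beta> * norm z)) \<longlongrightarrow> 0) (at_right 0)"
      by (auto intro!: tendsto_eq_intros)
    have "\<forall>h. 0 < h \<and> h < 1 / (2 * \<beta>) \<longrightarrow> - (2 * h * \<beta> * norm z) \<le> z$i"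
      using close \<beta>(1) by (simp add: field_simps)
    then show "\<forall>\<^sub>F h in at_right 0. - (2 * h * \<beta> * norm z) \<le> z$i"
      unfolding eventually_at_right_field using \<beta>(1) by (intro exI[of _ "1 / (2 * \<beta>)"]) simp
  qed simp
  then show ?thesis by (simp add: z_def less_eq_vec_def)
qed

lemma subinvariant_at_limit:
  fixes N :: "real^'n^'n"
  assumes N: "0 \<le> N" and ts: "spec_rad N < ts"
    and above: "\<And>h. 0 < h \<Longrightarrow> \<exists>v. (\<forall>i. 0 < v$i) \<and> (\<forall>i. (N *v v)$i < (ts + h) * v$i)"
  shows "\<exists>z. (\<forall>i. 0 < z$i) \<and> (\<forall>i. (N *v z)$i < ts * z$i)"
proof -
  let ?A = "ts *\<^sub>R mat 1 - N"
  have "x = 0" if "?A *v x = 0" for x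
  proof (rule ccontr)
    assume "x \<noteq> 0"
    moreover have "N *v x = ts *s x"
      using that scaled_id_minus_mult_nth[of ts N x] by (simp add: vec_eq_iff)
    ultimately show False
      using real_eigenvalue_le_spec_rad ts by fastforce
  qed
  then obtain K where K: "K ** ?A = mat 1"
    using matrix_left_invertible_ker by blast
  define z where "z = K *v 1"
  have "0 \<le> z"
    unfolding z_def
  proof (rule inverse_apply_nonneg_if_perturbed_nonneg[OF K])
    fix h :: real
    assume "0 < h"
    then obtain v where v: "\<forall>i. 0 < v$i" "\<forall>i. (N *v v)$i < (ts + h) * v$i"
      using above by blast
    note inv = scaled_id_minus_inverse_nonneg[OF N v]
    define y where "y = matrix_inv ((ts + h) *\<^sub>R mat 1 - N) *v 1"
    have "0 \<le> y"
      unfolding y_def by (rule matrix_vector_mult_nonneg[OF inv(2)]) (simp add: less_eq_vec_def)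
    moreover have "?A *v y + h *\<^sub>R y = 1"
    proof -
      have "((ts + h) *\<^sub>R mat 1 - N) *v y = 1"
        by (simp add: y_def matrix_vector_mul_assoc matrix_inv_right[OF inv(1)])
      then have "(ts + h) * y$i - (N *v y)$i = 1" for i
        using scaled_id_minus_mult_nth[of "ts + h" N y i] by simp
      then have "ts * y$i - (N *v y)$i + h * y$i = 1" for i
        by (simp add: algebra_simps)
      then show ?thesis
        by (simp add: vec_eq_iff scaled_id_minus_mult_nth)
    qed
    ultimately show "\<exists>y. 0 \<le> y \<and> ?A *v y + h *\<^sub>R y = 1" by blast
  qed
  have "0 < z$i \<and> (N *v z)$i < ts * z$i" for i
  proof -
    have "?A *v z = 1"
      using K matrix_left_right_inverse by (metis z_def matrix_vector_mul_assoc matrix_vector_mul_lid)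
    then have "ts * z$i - (N *v z)$i = 1"
      using scaled_id_minus_mult_nth[of ts N z i] by simp
    moreover have "0 \<le> (N *v z)$i"
      using matrix_vector_mult_nonneg[OF N \<open>0 \<le> z\<close>] by (simp add: less_eq_vec_def)
    ultimately have "0 < ts * z$i" and "(N *v z)$i < ts * z$i" by linarith+
    moreover have "0 < ts" using ts spec_rad_nonneg[of N] by linarith
    ultimately show ?thesis by (simp add: zero_less_mult_iff)
  qed
  then show ?thesis by blast
qed

lemma subinvariant_if_spec_rad_less:
  fixes N :: "real^'n^'n"
  assumes N: "0 \<le> N" and s: "spec_rad N < s"
  shows "\<exists>v. (\<forall>i. 0 < v$i) \<and> (\<forall>i. (N *v v)$i < s * v$i)"
proof (rule ccontr)
  define T where "T = {t. \<exists>v. (\<forall>i. 0 < v$i) \<and> (\<forall>i. (N *v v)$i < t * v$i)}"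
  assume "\<not> ?thesis"
  then have "s \<notin> T" by (simp add: T_def)
  have up: "t' \<in> T" if "t \<in> T" "t \<le> t'" for t t'
  proof -
    obtain v where v: "\<forall>i. 0 < v$i" "\<forall>i. (N *v v)$i < t * v$i"
      using \<open>t \<in> T\<close> T_def by auto
    have "(N *v v)$i < t' * v$i" for i
      using v mult_right_mono[OF \<open>t \<le> t'\<close>, of "v$i"] by (meson less_eq_real_def less_le_trans)
    then show ?thesis using v(1) T_def by blast
  qed
  have "(N *v 1)$i < (1 + (\<Sum>i\<in>UNIV. \<Sum>j\<in>UNIV. N$i$j)) * (1::real^'n)$i" for i
  proof -
    have "(N *v 1)$i = (\<Sum>j\<in>UNIV. N$i$j)"
      by (simp add: matrix_vector_mult_nth)
    also have "\<dots> \<le> (\<Sum>i\<in>UNIV. \<Sum>j\<in>UNIV. N$i$j)"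
      using N by (intro member_le_sum) (auto simp: matrix_le_iff intro: sum_nonneg)
    finally show ?thesis by simp
  qed
  then have "1 + (\<Sum>i\<in>UNIV. \<Sum>j\<in>UNIV. N$i$j) \<in> T"
    unfolding T_def by (intro CollectI exI[of _ "1::real^'n"]) simp
  then have "T \<noteq> {}" by blast
  have "s < t" if "t \<in> T" for t
    using up[OF that] \<open>s \<notin> T\<close> by (meson not_le)
  then have bdd: "bdd_below T" and "s \<le> Inf T"
    using \<open>T \<noteq> {}\<close> by (meson bdd_below.I cInf_greatest less_imp_le)+
  have "Inf T + h \<in> T" if "0 < h" for h
  proof -
    obtain t where "t \<in> T" "t < Inf T + h"
      using cInf_less_iff[OF \<open>T \<noteq> {}\<close> bdd] \<open>0 < h\<close> by (meson less_add_same_cancel1)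
    then show ?thesis using up less_imp_le by blast
  qed
  then have "Inf T \<in> T"
    using subinvariant_at_limit[OF N, of "Inf T"] s \<open>s \<le> Inf T\<close> unfolding T_def by simp
  then obtain v where v: "\<forall>i. 0 < v$i" "\<forall>i. (N *v v)$i < Inf T * v$i"
    unfolding T_def by blast
  then obtain e where "0 < e" "\<forall>i. (N *v v)$i < (Inf T - e) * v$i"
    using subinvariant_slack by blast
  then have "Inf T - e \<in> T" using v(1) unfolding T_def by blast
  then have "Inf T \<le> Inf T - e" using cInf_lower[OF _ bdd] by blast
  with \<open>0 < e\<close> show False by simp
qed

lemma nonsing_M_matrixD:
  fixes A :: "real^'n^'n"
  assumes "nonsing_M_matrix A"
  shows "invertible A" and "0 \<le> matrix_inv A"
    and "\<exists>v. (\<forall>i. 0 < v$i) \<and> (\<forall>i. 0 < (A *v v)$i)"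
proof -
  obtain s N where N: "0 \<le> N" "A = s *\<^sub>R mat 1 - N" "spec_rad N < s"
    using assms unfolding nonsing_M_matrix_def by blast
  obtain v where v: "\<forall>i. 0 < v$i" "\<forall>i. (N *v v)$i < s * v$i"
    using subinvariant_if_spec_rad_less[OF N(1,3)] by blast
  show "invertible A" and "0 \<le> matrix_inv A"
    using scaled_id_minus_inverse_nonneg[OF N(1) v] N(2) by simp_all
  show "\<exists>v. (\<forall>i. 0 < v$i) \<and> (\<forall>i. 0 < (A *v v)$i)"
    using v N(2) by (auto simp: scaled_id_minus_mult_nth)
qed

lemma nonsing_M_matrix_one_minusI:
  fixes N :: "real^'n^'n"
  assumes N: "0 \<le> N" and v: "\<forall>i. 0 < v$i" and Nv: "\<forall>i. (N *v v)$i < v$i"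
  shows "nonsing_M_matrix (mat 1 - N)" and "invertible (mat 1 - N)"
    and "0 \<le> matrix_inv (mat 1 - N)"
proof -
  have Nv1: "\<forall>i. (N *v v)$i < 1 * v$i" using Nv by simp
  show "nonsing_M_matrix (mat 1 - N)"
    unfolding nonsing_M_matrix_def
    using N spec_rad_less_if_subinvariant[OF N v Nv1] by (intro exI[of _ 1] exI[of _ N]) simp
  show "invertible (mat 1 - N)" and "0 \<le> matrix_inv (mat 1 - N)"
    using scaled_id_minus_inverse_nonneg[OF N v Nv1] by simp_all
qed

lemma mpow_0 [simp]: "mpow A 0 = mat 1"
  by (simp add: mpow_def)

lemma mpow_Suc: "mpow A (Suc n) = A ** mpow A n"
  by (simp add: mpow_def)

lemma mpow_add: "mpow (A::real^'n^'n) (m + n) = mpow A m ** mpow A n"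
  by (induction m) (simp_all add: mpow_Suc matrix_mul_assoc)

lemma mpow_mult_2: "mpow (A::real^'n^'n) (2 * n) = mpow (A ** A) n"
proof (induction n)
  case (Suc n)
  have "mpow A (2 * Suc n) = A ** (A ** mpow A (2 * n))"
    by (simp add: mpow_Suc)
  then show ?case using Suc by (simp add: mpow_Suc matrix_mul_assoc)
qed simp

lemma mpow_double: "mpow (A::real^'n^'n) (2 * n) = mpow A n ** mpow A n"
  using mpow_add[of A n n] by (simp add: mult_2)

lemma mpow_nonneg: "0 \<le> (A::real^'n^'n) \<Longrightarrow> 0 \<le> mpow A n"
  by (induction n) (simp_all add: mpow_Suc mat_one_nonneg matrix_mul_nonneg)

lemma mpow_even_nonneg: "(A::real^'n^'n) \<le> 0 \<Longrightarrow> 0 \<le> mpow A (2 * n)"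
  by (simp add: mpow_mult_2 mpow_nonneg matrix_mul_nonpos_nonpos)

section \<open>Nonpositive solutions of \<open>P = -(K\<^sub>0 + K\<^sub>1 P\<^sup>2)\<close>\<close>

lemma nonneg_matrix_entry_le:
  fixes M :: "real^'n^'n"
  assumes M: "0 \<le> M" and u: "\<forall>i. 0 < u$i" and Mu: "M *v u \<le> u"
  shows "M $ a $ b \<le> u$a / u$b"
proof -
  have "M $ a $ b * u$b \<le> (\<Sum>c\<in>UNIV. M $ a $ c * u$c)"
    using M u by (intro member_le_sum) (auto simp: matrix_le_iff less_imp_le)
  also have "\<dots> \<le> u$a"
    using Mu by (simp add: less_eq_vec_def matrix_vector_mult_nth)
  finally show ?thesis
    using u by (simp add: le_divide_eq)
qed

lemma quadratic_map_antimono: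
  fixes K0 K1 M M' :: "real^'n^'n"
  assumes K1: "0 \<le> K1" and "M' \<le> M" "M \<le> 0"
  shows "- (K0 + K1 ** (M' ** M')) \<le> - (K0 + K1 ** (M ** M))"
proof -
  have M: "0 \<le> - M" "- M \<le> - M'" using assms by auto
  then have "(- M) ** (- M) \<le> (- M') ** (- M')" by (rule matrix_mul_mono[OF M])
  then have "K1 ** (M ** M) \<le> K1 ** (M' ** M')"
    by (simp add: matrix_mul_left_mono[OF K1] matrix_mul_uminus_left matrix_mul_uminus_right)
  then show ?thesis by simp
qed

lemma quadratic_map_bounded:
  fixes K0 K1 M :: "real^'n^'n"
  assumes K0: "0 \<le> K0" and K1: "0 \<le> K1" and u: "0 \<le> u"
    and w: "(K0 + K1) *v u \<le> u" and M: "M \<le> 0" "(- M) *v u \<le> (K0 + K1) *v u"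
  shows "(K0 + K1 ** (M ** M)) *v u \<le> (K0 + K1) *v u"
proof -
  have "0 \<le> - M" using M(1) by simp
  have "(M ** M) *v u = (- M) *v ((- M) *v u)"
    by (simp add: matrix_vector_mul_assoc matrix_mul_uminus_left matrix_mul_uminus_right)
  also have "\<dots> \<le> (- M) *v u"
    using M(2) w by (intro matrix_vector_mult_left_mono[OF \<open>0 \<le> - M\<close>]) simp
  also have "\<dots> \<le> u"
    using M(2) w by simp
  finally have "K1 *v ((M ** M) *v u) \<le> K1 *v u"
    by (rule matrix_vector_mult_left_mono[OF K1])
  then show ?thesis
    by (simp add: matrix_vector_mult_add_rdistrib matrix_vector_mul_assoc)
qed

text \<open>
  The monotone iteration \<open>Z\<^sub>0 = 0\<close>, \<open>Z\<^sub>j\<^sub>+\<^sub>1 = -(K\<^sub>0 + K\<^sub>1 Z\<^sub>j\<^sup>2)\<close> decreases and is bounded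
  below entrywise, because \<open>(-Z\<^sub>j) u \<le> (K\<^sub>0 + K\<^sub>1) u \<le> u\<close> for a positive \<open>u\<close>.
\<close>

lemma nonpos_quadratic_fixpoint_exists:
  fixes K0 K1 :: "real^'n^'n" and u :: "real^'n"
  assumes K0: "0 \<le> K0" and K1: "0 \<le> K1" and u: "\<forall>i. 0 < u$i"
    and w: "(K0 + K1) *v u \<le> u"
  shows "\<exists>P. P \<le> 0 \<and> P = - (K0 + K1 ** (P ** P)) \<and> (- P) *v u \<le> (K0 + K1) *v u"
proof -
  define G where "G M = - (K0 + K1 ** (M ** M))" for M :: "real^'n^'n"
  define Z where "Z j = (G ^^ j) 0" for j
  have Z_Suc: "Z (Suc j) = G (Z j)" for j by (simp add: Z_def)
  have u0: "0 \<le> u" using u by (simp add: less_eq_vec_def less_imp_le)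
  have Z: "Z j \<le> 0 \<and> Z (Suc j) \<le> Z j \<and> (- Z j) *v u \<le> (K0 + K1) *v u" for j
  proof (induction j)
    case 0
    have "0 \<le> (K0 + K1) *v u" using K0 K1 u0 by (simp add: matrix_vector_mult_nonneg)
    then show ?case using K0 by (simp add: Z_def G_def)
  next
    case (Suc j)
    then have Zj: "Z j \<le> 0" "Z (Suc j) \<le> Z j" "(- Z j) *v u \<le> (K0 + K1) *v u" by auto
    have "Z (Suc (Suc j)) \<le> Z (Suc j)"
      using quadratic_map_antimono[OF K1 Zj(2) Zj(1), of K0] by (simp only: Z_Suc G_def)
    moreover have "(- Z (Suc j)) *v u \<le> (K0 + K1) *v u"
      using quadratic_map_bounded[OF K0 K1 u0 w Zj(1) Zj(3)] by (simp add: Z_Suc G_def add.commute)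
    ultimately show ?case using Zj order_trans by blast
  qed
  have lower: "- (u$a / u$b) \<le> Z j $ a $ b" for j a b
  proof -
    have "0 \<le> - Z j" using Z[of j] by simp
    moreover have "(- Z j) *v u \<le> u" using Z[of j] w by (meson order_trans)
    ultimately have "(- Z j) $ a $ b \<le> u$a / u$b" by (rule nonneg_matrix_entry_le[OF _ u])
    then show ?thesis by simp
  qed
  obtain P where P: "(\<lambda>j. Z j $ a $ b) \<longlonglongrightarrow> P $ a $ b" for a b
  proof -
    have "convergent (\<lambda>j. Z j $ a $ b)" for a b
    proof -
      have "decseq (\<lambda>j. Z j $ a $ b)"
        using Z by (intro decseq_SucI) (simp add: matrix_le_iff)
      then obtain L where "(\<lambda>j. Z j $ a $ b) \<longlonglongrightarrow> L"
        by (rule decseq_convergent[of _ "- (u$a / u$b)"]) (use lower in auto)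
      then show ?thesis by (rule convergentI)
    qed
    then have "(\<lambda>j. Z j $ a $ b) \<longlonglongrightarrow> (\<chi> a b. lim (\<lambda>j. Z j $ a $ b)) $ a $ b" for a b
      by (simp add: convergent_LIMSEQ_iff)
    then show ?thesis by (rule that)
  qed
  have "P $ a $ b \<le> 0" for a b
    using Z by (intro LIMSEQ_le_const2[OF P]) (auto simp: matrix_le_iff)
  then have "P \<le> 0" by (simp add: matrix_le_iff)
  moreover have "P = G P"
  proof -
    have "(\<lambda>j. Z (Suc j) $ a $ b) \<longlonglongrightarrow> G P $ a $ b" for a b
      unfolding Z_Suc G_def by (simp add: matrix_matrix_mult_nth) (intro tendsto_intros P)
    then have "P $ a $ b = G P $ a $ b" for a b
      using LIMSEQ_Suc[OF P] by (rule LIMSEQ_unique[rotated])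
    then show ?thesis by (simp add: vec_eq_iff)
  qed
  moreover have "(- P) *v u \<le> (K0 + K1) *v u"
  proof -
    have lim: "(\<lambda>j. ((- Z j) *v u) $ a) \<longlonglongrightarrow> ((- P) *v u) $ a" for a
      by (simp add: matrix_vector_mult_nth) (intro tendsto_intros P)
    have "((- P) *v u) $ a \<le> ((K0 + K1) *v u) $ a" for a
      using Z by (intro LIMSEQ_le_const2[OF lim]) (auto simp: less_eq_vec_def)
    then show ?thesis by (simp add: less_eq_vec_def)
  qed
  ultimately show ?thesis unfolding G_def by blast
qed

section \<open>Bounds on the maximal solvents\<close>

lemma nonneg_inverse_mult_pos:
  fixes K A :: "real^'n^'n"
  assumes K: "0 \<le> K" "K ** A = mat 1" and d: "\<forall>i. 0 < d$i"
  shows "0 < (K *v d)$i"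
proof -
  have "\<exists>j. K$i$j \<noteq> 0"
  proof (rule ccontr)
    assume "\<not> ?thesis"
    then have "(K ** A)$i$i = 0" by (simp add: matrix_matrix_mult_nth)
    then show False using K(2) by (simp add: mat_def)
  qed
  then obtain j where "K$i$j \<noteq> 0" by blast
  then have "0 < K$i$j * d$j" using K(1) d by (simp add: matrix_le_iff order_le_neq_trans)
  also have "\<dots> \<le> (\<Sum>k\<in>UNIV. K$i$k * d$k)"
    using K(1) d by (intro member_le_sum) (auto simp: matrix_le_iff less_imp_le)
  finally show ?thesis by (simp add: matrix_vector_mult_nth)
qed

lemma max_nonpos_solvent_bound:
  fixes B C Phi :: "real^'n^'n"
  assumes B: "invertible B" "0 \<le> matrix_inv B" and BC: "0 \<le> matrix_inv B ** C"
    and u: "\<forall>i. 0 < u$i" and w: "(matrix_inv B ** C + matrix_inv B) *v u \<le> u"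
    and Phi: "max_nonpos_solvent B C Phi"
  shows "(- Phi) *v u \<le> (matrix_inv B ** C + matrix_inv B) *v u"
proof -
  obtain P where P: "P \<le> 0" "P = - (matrix_inv B ** C + matrix_inv B ** (P ** P))"
    "(- P) *v u \<le> (matrix_inv B ** C + matrix_inv B) *v u"
    using nonpos_quadratic_fixpoint_exists[OF BC B(2) u w] by blast
  have "B ** P = B ** (- (matrix_inv B ** C + matrix_inv B ** (P ** P)))"
    using P(2) by (rule arg_cong)
  also have "\<dots> = - (C + P ** P)"
    by (simp add: matrix_add_ldistrib matrix_diff_ldistrib matrix_mul_uminus_right matrix_mul_assoc
        matrix_inv_right[OF B(1)])
  finally have "P ** P + B ** P + C = 0" by simp
  then have "P \<le> Phi" using Phi P(1) unfolding max_nonpos_solvent_def by blast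
  then have "(- Phi) *v u \<le> (- P) *v u"
    using u by (intro matrix_vector_mult_right_mono) (auto simp: less_eq_vec_def less_imp_le)
  then show ?thesis using P(3) by (rule order_trans)
qed

lemma max_nonpos_dual_solvent_bound:
  fixes B C Psi :: "real^'n^'n"
  assumes B: "invertible B" "0 \<le> matrix_inv B" and BC: "0 \<le> matrix_inv B ** C"
    and u: "\<forall>i. 0 < u$i" and w: "(matrix_inv B ** C + matrix_inv B) *v u \<le> u"
    and Psi: "max_nonpos_dual_solvent B C Psi"
  shows "(- Psi) *v u \<le> (matrix_inv B ** C + matrix_inv B) *v u"
proof -
  have w': "(matrix_inv B + matrix_inv B ** C) *v u \<le> u" using w by (simp add: add.commute)
  obtain Q where Q: "Q \<le> 0" "Q = - (matrix_inv B + (matrix_inv B ** C) ** (Q ** Q))"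
    "(- Q) *v u \<le> (matrix_inv B + matrix_inv B ** C) *v u"
    using nonpos_quadratic_fixpoint_exists[OF B(2) BC u w'] by blast
  have "B ** Q = B ** (- (matrix_inv B + (matrix_inv B ** C) ** (Q ** Q)))"
    using Q(2) by (rule arg_cong)
  also have "\<dots> = - (mat 1 + C ** (Q ** Q))"
    by (simp add: matrix_add_ldistrib matrix_diff_ldistrib matrix_mul_uminus_right matrix_mul_assoc
        matrix_inv_right[OF B(1)])
  finally have "C ** Q ** Q + B ** Q + mat 1 = 0" by (simp add: matrix_mul_assoc)
  then have "Q \<le> Psi" using Psi Q(1) unfolding max_nonpos_dual_solvent_def by blast
  then have "(- Psi) *v u \<le> (- Q) *v u"
    using u by (intro matrix_vector_mult_right_mono) (auto simp: less_eq_vec_def less_imp_le)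
  with Q(3) show ?thesis by (simp add: add.commute)
qed

lemma solvents_contracting_vector:
  fixes B C Phi Psi :: "real^'n^'n"
  assumes B: "nonsing_M_matrix B" and BC: "0 \<le> matrix_inv B ** C"
    and BCI: "nonsing_M_matrix (B - C - mat 1)"
    and Phi: "max_nonpos_solvent B C Phi" and Psi: "max_nonpos_dual_solvent B C Psi"
  shows "\<exists>u. (\<forall>i. 0 < u$i) \<and> (\<forall>i. ((- Phi) *v u)$i < u$i) \<and> (\<forall>i. ((- Psi) *v u)$i < u$i)"
proof -
  note Bi = nonsing_M_matrixD(1,2)[OF B]
  obtain u where u: "\<forall>i. 0 < u$i" "\<forall>i. 0 < ((B - C - mat 1) *v u)$i"
    using nonsing_M_matrixD(3)[OF BCI] by blast
  define w where "w = (matrix_inv B ** C + matrix_inv B) *v u"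
  have "matrix_inv B *v ((B - C - mat 1) *v u) = u - w"
    by (simp add: w_def matrix_vector_mult_diff_rdistrib matrix_vector_mult_add_rdistrib
        matrix_vector_mult_diff_distrib matrix_vector_mul_assoc matrix_inv_left[OF Bi(1)])
  then have w_less: "w$i < u$i" for i
    using nonneg_inverse_mult_pos[OF Bi(2) matrix_inv_left[OF Bi(1)] u(2), of i] by simp
  then have "w \<le> u" by (simp add: less_eq_vec_def less_imp_le)
  then have "(- Phi) *v u \<le> w" and "(- Psi) *v u \<le> w"
    unfolding w_def
    using max_nonpos_solvent_bound[OF Bi BC u(1) _ Phi] max_nonpos_dual_solvent_bound[OF Bi BC u(1) _ Psi]
    by blast+
  then have "((- Phi) *v u)$i < u$i" and "((- Psi) *v u)$i < u$i" for i
    using w_less[of i] unfolding less_eq_vec_def by (meson le_less_trans)+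
  with u(1) show ?thesis by blast
qed

lemma one_minus_product_nonsing_M:
  fixes X Y Phi Psi :: "real^'n^'n"
  assumes u: "\<forall>i. 0 < u$i" and Phi_u: "\<forall>i. ((- Phi) *v u)$i < u$i"
    and Psi_u: "\<forall>i. ((- Psi) *v u)$i < u$i"
    and X: "Phi \<le> X" "X \<le> 0" and Y: "Psi \<le> Y" "Y \<le> 0"
  shows "nonsing_M_matrix (mat 1 - X ** Y)" and "invertible (mat 1 - X ** Y)"
    and "0 \<le> matrix_inv (mat 1 - X ** Y)"
proof -
  have u0: "0 \<le> u" using u by (simp add: less_eq_vec_def less_imp_le)
  have nX: "0 \<le> - X" using X(2) by simp
  have "(X ** Y) *v u = (- X) *v ((- Y) *v u)"
    by (simp add: matrix_mul_uminus_left matrix_mul_uminus_right matrix_vector_mul_assoc)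
  also have "\<dots> \<le> (- X) *v ((- Psi) *v u)"
    using Y(1) u0 by (intro matrix_vector_mult_left_mono[OF nX] matrix_vector_mult_right_mono) auto
  also have "\<dots> \<le> (- X) *v u"
    using Psi_u by (intro matrix_vector_mult_left_mono[OF nX]) (simp add: less_eq_vec_def less_imp_le)
  also have "\<dots> \<le> (- Phi) *v u"
    using X(1) u0 by (intro matrix_vector_mult_right_mono) auto
  finally have "\<forall>i. ((X ** Y) *v u)$i < u$i"
    using Phi_u by (auto simp: less_eq_vec_def intro: le_less_trans)
  then show "nonsing_M_matrix (mat 1 - X ** Y)" and "invertible (mat 1 - X ** Y)"
    and "0 \<le> matrix_inv (mat 1 - X ** Y)"
    using nonsing_M_matrix_one_minusI[OF matrix_mul_nonpos_nonpos[OF X(2) Y(2)] u] by simp_all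
qed

section \<open>The doubling iteration\<close>

lemma doubling_step_identities:
  fixes E F X Y P R V W :: "real^'n^'n"
  assumes W: "W ** (mat 1 - Y ** X) = mat 1" and V: "V ** (mat 1 - X ** Y) = mat 1"
    and E: "E = (mat 1 - Y ** P) ** R" and X: "X - P = - (F ** P ** R)"
  shows "E ** W ** E = (mat 1 - (Y + E ** W ** Y ** F) ** P) ** (R ** R)"
    and "(X + F ** V ** X ** E) - P = - ((F ** V ** F) ** P ** (R ** R))"
proof -
  have FPR: "F ** P ** R = P - X" using X by (metis minus_diff_eq neg_equal_iff_equal)
  have "W ** (mat 1 - Y ** P) = W ** ((mat 1 - Y ** X) - Y ** (P - X))"
    by (simp add: matrix_diff_ldistrib)
  also have "\<dots> = W ** (mat 1 - Y ** X) - W ** (Y ** (P - X))"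
    by (rule matrix_diff_ldistrib)
  also have "\<dots> = mat 1 - W ** Y ** (P - X)"
    using W by (simp add: matrix_mul_assoc)
  finally have WE: "W ** (mat 1 - Y ** P) = mat 1 - W ** Y ** (P - X)" .
  have "E ** W ** E = E ** (W ** (mat 1 - Y ** P)) ** R"
    by (subst (2) E) (simp add: matrix_mul_assoc)
  also have "\<dots> = E ** R - E ** W ** Y ** (F ** P ** R) ** R"
    unfolding WE FPR by (simp add: matrix_diff_ldistrib matrix_diff_rdistrib matrix_mul_assoc)
  also have "\<dots> = (mat 1 - (Y + E ** W ** Y ** F) ** P) ** (R ** R)"
    by (simp add: E matrix_diff_rdistrib matrix_add_rdistrib matrix_mul_assoc)
  finally show "E ** W ** E = (mat 1 - (Y + E ** W ** Y ** F) ** P) ** (R ** R)" .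
  have VXY: "V ** X ** Y ** P = V ** P - P"
  proof -
    have "V ** (mat 1 - X ** Y) ** P = P" using V by simp
    then have "V ** P - V ** X ** Y ** P = P"
      by (simp add: matrix_diff_ldistrib matrix_diff_rdistrib matrix_mul_assoc)
    then show ?thesis by (simp add: eq_diff_eq diff_eq_eq add.commute)
  qed
  have "(X + F ** V ** X ** E) - P
      = - (F ** P ** R) + (F ** V ** X ** R - F ** (V ** X ** Y ** P) ** R)"
    by (simp add: X E matrix_diff_ldistrib matrix_diff_rdistrib matrix_mul_assoc)
  also have "\<dots> = F ** V ** X ** R - F ** V ** P ** R"
    unfolding VXY by (simp add: matrix_diff_ldistrib matrix_diff_rdistrib matrix_mul_assoc)
  also have "\<dots> = - (F ** V ** (F ** P ** R) ** R)"
    unfolding FPR by (simp add: matrix_diff_ldistrib matrix_diff_rdistrib matrix_mul_assoc)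
  also have "\<dots> = - ((F ** V ** F) ** P ** (R ** R))"
    by (simp add: matrix_mul_assoc)
  finally show "(X + F ** V ** X ** E) - P = - ((F ** V ** F) ** P ** (R ** R))" .
qed

lemma congruence_nonneg:
  fixes E W :: "real^'n^'n"
  assumes "0 \<le> E \<or> E \<le> 0" and "0 \<le> W"
  shows "0 \<le> E ** W ** E"
  using assms(1)
proof
  assume "E \<le> 0"
  then have "0 \<le> (- E) ** W ** (- E)" using assms(2) by (simp add: matrix_mul_nonneg)
  then show ?thesis by (simp add: matrix_mul_uminus_left matrix_mul_uminus_right)
qed (use assms(2) in \<open>simp add: matrix_mul_nonneg\<close>)

lemma same_sign_correction_nonpos:
  fixes E F V X :: "real^'n^'n"
  assumes "0 \<le> V" "X \<le> 0" "(0 \<le> E \<and> 0 \<le> F) \<or> (E \<le> 0 \<and> F \<le> 0)"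
  shows "F ** V ** X ** E \<le> 0"
  using assms(3)
proof
  assume "0 \<le> E \<and> 0 \<le> F"
  then have "0 \<le> F ** V ** (- X) ** E" using assms(1,2) by (simp add: matrix_mul_nonneg)
  then show ?thesis by (simp add: matrix_mul_uminus_left matrix_mul_uminus_right)
next
  assume "E \<le> 0 \<and> F \<le> 0"
  then have "0 \<le> (- F) ** V ** (- X) ** (- E)" using assms(1,2) by (simp add: matrix_mul_nonneg)
  then show ?thesis by (simp add: matrix_mul_uminus_left matrix_mul_uminus_right)
qed

lemma error_le_of_factorization:
  fixes Q X Psi D :: "real^'n^'n"
  assumes "0 \<le> Q" "X \<le> 0" "Psi \<le> 0" "D = (mat 1 - X ** Psi) ** Q"
  shows "D \<le> Q"
proof -
  have "Q - D = (X ** Psi) ** Q" using assms(4) by (simp add: matrix_diff_rdistrib)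
  then have "0 \<le> Q - D"
    using matrix_mul_nonneg[OF matrix_mul_nonpos_nonpos[OF assms(2,3)] assms(1)] by simp
  then show ?thesis by simp
qed

lemma le_if_error_factorization:
  fixes F P X :: "real^'n^'n"
  assumes F: "0 \<le> F" and P: "P \<le> 0" and X: "X - P = F ** (- P) ** mpow P (2 * n)"
  shows "P \<le> X"
proof (rule matrix_le_if_diff_nonneg)
  show "0 \<le> X - P"
    unfolding X using F P mpow_even_nonneg[OF P] by (intro matrix_mul_nonneg) simp_all
qed

locale doubling_iteration =
  fixes B C Phi Psi :: "real^'n^'n" and X Y E F :: "nat \<Rightarrow> real^'n^'n"
  assumes B: "nonsing_M_matrix B"
    and BC: "matrix_inv B ** C \<ge> 0"
    and BCI: "nonsing_M_matrix (B - C - mat 1)"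
    and Phi: "max_nonpos_solvent B C Phi"
    and Psi: "max_nonpos_dual_solvent B C Psi"
    and X_0: "X 0 = - (matrix_inv B ** C)" and E_0: "E 0 = - (matrix_inv B ** C)"
    and Y_0: "Y 0 = - matrix_inv B" and F_0: "F 0 = - matrix_inv B"
    and E_Suc: "\<And>i. E (Suc i) = E i ** matrix_inv (mat 1 - Y i ** X i) ** E i"
    and F_Suc: "\<And>i. F (Suc i) = F i ** matrix_inv (mat 1 - X i ** Y i) ** F i"
    and X_Suc: "\<And>i. X (Suc i) = X i + F i ** matrix_inv (mat 1 - X i ** Y i) ** X i ** E i"
    and Y_Suc: "\<And>i. Y (Suc i) = Y i + E i ** matrix_inv (mat 1 - Y i ** X i) ** Y i ** F i"
begin

lemma B_inverse: "invertible B" "0 \<le> matrix_inv B"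
  using nonsing_M_matrixD[OF B] by blast+

lemma Phi_nonpos: "Phi \<le> 0" and Psi_nonpos: "Psi \<le> 0"
  using Phi Psi unfolding max_nonpos_solvent_def max_nonpos_dual_solvent_def by blast+

lemma B_inverse_Phi_sq: "matrix_inv B ** (Phi ** Phi) = - Phi - matrix_inv B ** C"
proof -
  have "Phi ** Phi + (B ** Phi + C) = 0"
    using Phi unfolding max_nonpos_solvent_def by (simp add: add.assoc)
  then have "Phi ** Phi = - (B ** Phi + C)" by (simp only: eq_neg_iff_add_eq_0)
  then show ?thesis
    by (simp add: matrix_mul_uminus_right matrix_diff_ldistrib matrix_mul_assoc
        matrix_inv_left[OF B_inverse(1)])
qed

lemma B_inverse_C_Psi_sq: "matrix_inv B ** (C ** Psi ** Psi) = - Psi - matrix_inv B"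
proof -
  have "C ** Psi ** Psi + (B ** Psi + mat 1) = 0"
    using Psi unfolding max_nonpos_dual_solvent_def by (simp add: add.assoc)
  then have "C ** Psi ** Psi = - (B ** Psi + mat 1)" by (simp only: eq_neg_iff_add_eq_0)
  then show ?thesis
    by (simp add: matrix_mul_uminus_right matrix_diff_ldistrib matrix_mul_assoc
        matrix_inv_left[OF B_inverse(1)])
qed

lemma one_minus_products:
  assumes "Phi \<le> X'" "X' \<le> 0" "Psi \<le> Y'" "Y' \<le> 0"
  shows "nonsing_M_matrix (mat 1 - X' ** Y')" "invertible (mat 1 - X' ** Y')"
    "0 \<le> matrix_inv (mat 1 - X' ** Y')"
    and "nonsing_M_matrix (mat 1 - Y' ** X')" "invertible (mat 1 - Y' ** X')"
    "0 \<le> matrix_inv (mat 1 - Y' ** X')"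
proof -
  obtain u where u: "\<forall>i. 0 < u$i" "\<forall>i. ((- Phi) *v u)$i < u$i" "\<forall>i. ((- Psi) *v u)$i < u$i"
    using solvents_contracting_vector[OF B BC BCI Phi Psi] by blast
  show "nonsing_M_matrix (mat 1 - X' ** Y')" "invertible (mat 1 - X' ** Y')"
    "0 \<le> matrix_inv (mat 1 - X' ** Y')"
    using one_minus_product_nonsing_M[OF u assms] by simp_all
  show "nonsing_M_matrix (mat 1 - Y' ** X')" "invertible (mat 1 - Y' ** X')"
    "0 \<le> matrix_inv (mat 1 - Y' ** X')"
    using one_minus_product_nonsing_M[OF u(1,3,2) assms(3,4,1,2)] by simp_all
qed

definition invariant :: "nat \<Rightarrow> bool" where
  "invariant k \<longleftrightarrow> Phi \<le> X k \<and> X k \<le> 0 \<and> Psi \<le> Y k \<and> Y k \<le> 0 \<and>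
     E k = (mat 1 - Y k ** Phi) ** mpow Phi (2^k) \<and> F k = (mat 1 - X k ** Psi) ** mpow Psi (2^k) \<and>
     X k - Phi = - (F k ** Phi ** mpow Phi (2^k)) \<and> Y k - Psi = - (E k ** Psi ** mpow Psi (2^k)) \<and>
     ((0 \<le> E k \<and> 0 \<le> F k) \<or> (E k \<le> 0 \<and> F k \<le> 0))"

lemma invariant_0: "invariant 0"
proof -
  have "(mat 1 - Y 0 ** Phi) ** Phi = Phi + matrix_inv B ** (Phi ** Phi)"
    by (simp add: Y_0 matrix_mul_algebra)
  then have E: "E 0 = (mat 1 - Y 0 ** Phi) ** Phi"
    by (simp add: B_inverse_Phi_sq E_0)
  have "(mat 1 - X 0 ** Psi) ** Psi = Psi + matrix_inv B ** (C ** Psi ** Psi)"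
    by (simp add: X_0 matrix_mul_algebra)
  then have F: "F 0 = (mat 1 - X 0 ** Psi) ** Psi"
    by (simp add: B_inverse_C_Psi_sq F_0)
  have F_Phi: "- (F 0 ** Phi ** Phi) = matrix_inv B ** (Phi ** Phi)"
    by (simp add: F_0 matrix_mul_uminus_left matrix_mul_assoc)
  have X: "X 0 - Phi = - (F 0 ** Phi ** Phi)"
    by (simp add: F_Phi B_inverse_Phi_sq X_0)
  have E_Psi: "- (E 0 ** Psi ** Psi) = (matrix_inv B ** C) ** (Psi ** Psi)"
    by (simp add: E_0 matrix_mul_uminus_left matrix_mul_assoc)
  have Y: "Y 0 - Psi = - (E 0 ** Psi ** Psi)"
    using B_inverse_C_Psi_sq by (simp add: E_Psi Y_0 matrix_mul_assoc)
  have "Phi \<le> X 0"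
  proof (rule matrix_le_if_diff_nonneg)
    show "0 \<le> X 0 - Phi"
      unfolding X F_Phi by (intro matrix_mul_nonneg B_inverse(2) matrix_mul_nonpos_nonpos Phi_nonpos)
  qed
  moreover have "Psi \<le> Y 0"
  proof (rule matrix_le_if_diff_nonneg)
    show "0 \<le> Y 0 - Psi"
      unfolding Y E_Psi by (intro matrix_mul_nonneg BC matrix_mul_nonpos_nonpos Psi_nonpos)
  qed
  moreover have "E 0 \<le> 0" "F 0 \<le> 0" "X 0 \<le> 0" "Y 0 \<le> 0"
    using BC B_inverse(2) by (simp_all add: X_0 Y_0 E_0 F_0)
  ultimately show ?thesis
    using E F X Y unfolding invariant_def by (simp add: mpow_Suc)
qed

lemma invariant_Suc:
  assumes "invariant k"
  shows "invariant (Suc k)" and "X (Suc k) \<le> X k" and "Y (Suc k) \<le> Y k"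
    and "0 \<le> E (Suc k)" and "0 \<le> F (Suc k)"
proof -
  define V where "V = matrix_inv (mat 1 - X k ** Y k)"
  define W where "W = matrix_inv (mat 1 - Y k ** X k)"
  have bounds: "Phi \<le> X k" "X k \<le> 0" "Psi \<le> Y k" "Y k \<le> 0"
    and E: "E k = (mat 1 - Y k ** Phi) ** mpow Phi (2^k)"
    and F: "F k = (mat 1 - X k ** Psi) ** mpow Psi (2^k)"
    and X: "X k - Phi = - (F k ** Phi ** mpow Phi (2^k))"
    and Y: "Y k - Psi = - (E k ** Psi ** mpow Psi (2^k))"
    and signs: "(0 \<le> E k \<and> 0 \<le> F k) \<or> (E k \<le> 0 \<and> F k \<le> 0)"
    using assms unfolding invariant_def by blast+
  note inverses = one_minus_products[OF bounds]
  have V: "V ** (mat 1 - X k ** Y k) = mat 1" "0 \<le> V"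
    and W: "W ** (mat 1 - Y k ** X k) = mat 1" "0 \<le> W"
    using inverses matrix_inv_left by (simp_all add: V_def W_def)
  have E_Suc': "E (Suc k) = E k ** W ** E k" and F_Suc': "F (Suc k) = F k ** V ** F k"
    and X_Suc': "X (Suc k) = X k + F k ** V ** X k ** E k"
    and Y_Suc': "Y (Suc k) = Y k + E k ** W ** Y k ** F k"
    by (simp_all add: E_Suc F_Suc X_Suc Y_Suc V_def W_def)
  note ids_Phi = doubling_step_identities[OF W(1) V(1) E X]
  note ids_Psi = doubling_step_identities[OF V(1) W(1) F Y]
  have E_nonneg: "0 \<le> E (Suc k)" and F_nonneg: "0 \<le> F (Suc k)"
    using signs V(2) W(2) by (auto simp: E_Suc' F_Suc' intro!: congruence_nonneg)
  have X_le: "X (Suc k) \<le> X k" and Y_le: "Y (Suc k) \<le> Y k"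
    using same_sign_correction_nonpos[OF V(2) bounds(2) signs]
      same_sign_correction_nonpos[OF W(2) bounds(4), of "F k" "E k"] signs
    by (auto simp: X_Suc' Y_Suc')
  have X_Suc_err: "X (Suc k) - Phi = F (Suc k) ** (- Phi) ** mpow Phi (2 ^ Suc k)"
    and Y_Suc_err: "Y (Suc k) - Psi = E (Suc k) ** (- Psi) ** mpow Psi (2 ^ Suc k)"
    using ids_Phi(2) ids_Psi(2)
    by (simp_all add: X_Suc' Y_Suc' E_Suc' F_Suc' mpow_double
        matrix_mul_uminus_left matrix_mul_uminus_right)
  have "Phi \<le> X (Suc k)" and "Psi \<le> Y (Suc k)"
    using le_if_error_factorization[OF F_nonneg Phi_nonpos, of "X (Suc k)" "2^k"]
      le_if_error_factorization[OF E_nonneg Psi_nonpos, of "Y (Suc k)" "2^k"] X_Suc_err Y_Suc_err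
    by simp_all
  moreover have "X (Suc k) \<le> 0" "Y (Suc k) \<le> 0"
    using X_le Y_le bounds(2,4) by (meson order_trans)+
  ultimately show "invariant (Suc k)"
    unfolding invariant_def
    using ids_Phi ids_Psi E_nonneg F_nonneg
    by (simp add: E_Suc' F_Suc' X_Suc' Y_Suc' mpow_double)
  show "X (Suc k) \<le> X k" "Y (Suc k) \<le> Y k" "0 \<le> E (Suc k)" "0 \<le> F (Suc k)"
    by (fact X_le Y_le E_nonneg F_nonneg)+
qed

lemma invariant_holds: "invariant k"
  by (induction k) (simp_all add: invariant_0 invariant_Suc)

lemma iterate_bounds: "Phi \<le> X k" "X k \<le> 0" "Psi \<le> Y k" "Y k \<le> 0"
  using invariant_holds[of k] unfolding invariant_def by blast+

lemmas one_minus_products_at = one_minus_products[OF iterate_bounds]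

lemma E_eq: "E k = (mat 1 - Y k ** Phi) ** mpow Phi (2^k)"
  and F_eq: "F k = (mat 1 - X k ** Psi) ** mpow Psi (2^k)"
  using invariant_holds[of k] unfolding invariant_def by blast+

lemma E_nonneg: "1 \<le> k \<Longrightarrow> 0 \<le> E k"
  and F_nonneg: "1 \<le> k \<Longrightarrow> 0 \<le> F k"
  and X_antimono: "1 \<le> k \<Longrightarrow> X k \<le> X (k - 1)"
  and Y_antimono: "1 \<le> k \<Longrightarrow> Y k \<le> Y (k - 1)"
  using invariant_Suc[OF invariant_holds, of "k - 1"] by simp_all

lemma error_bounds:
  assumes "1 \<le> k"
  shows "X k - Phi \<le> mpow Psi (2^k) ** (- Phi) ** mpow Phi (2^k)"
    and "Y k - Psi \<le> mpow Phi (2^k) ** (- Psi) ** mpow Psi (2^k)"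
proof -
  obtain m where k: "k = Suc m" using assms by (cases k) auto
  have "0 \<le> mpow Phi (2^k)" "0 \<le> mpow Psi (2^k)"
    unfolding k using mpow_even_nonneg Phi_nonpos Psi_nonpos by simp_all
  then have "0 \<le> mpow Psi (2^k) ** (- Phi) ** mpow Phi (2^k)"
    and "0 \<le> mpow Phi (2^k) ** (- Psi) ** mpow Psi (2^k)"
    using Phi_nonpos Psi_nonpos by (simp_all add: matrix_mul_nonneg)
  moreover have "X k - Phi = (mat 1 - X k ** Psi) ** (mpow Psi (2^k) ** (- Phi) ** mpow Phi (2^k))"
    and "Y k - Psi = (mat 1 - Y k ** Phi) ** (mpow Phi (2^k) ** (- Psi) ** mpow Psi (2^k))"
    using invariant_holds[of k] unfolding invariant_def
    by (simp_all add: matrix_mul_uminus_left matrix_mul_uminus_right matrix_mul_assoc)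
  ultimately show "X k - Phi \<le> mpow Psi (2^k) ** (- Phi) ** mpow Phi (2^k)"
    and "Y k - Psi \<le> mpow Phi (2^k) ** (- Psi) ** mpow Psi (2^k)"
    using error_le_of_factorization iterate_bounds Phi_nonpos Psi_nonpos by blast+
qed

end

theorem theorem3p5:
  fixes B C Phi Psi :: "real^'n^'n"
    and X Y E F :: "nat \<Rightarrow> real^'n^'n"
  assumes hB: "nonsing_M_matrix B"
    and hC: "M_matrix C"
    and hBC: "matrix_inv B ** C \<ge> 0"
    and hBCI: "nonsing_M_matrix (B - C - mat 1)"
    and hPhi: "max_nonpos_solvent B C Phi"
    and hPsi: "max_nonpos_dual_solvent B C Psi"
    and X0: "X 0 = - (matrix_inv B ** C)" and E0: "E 0 = - (matrix_inv B ** C)"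
    and Y0: "Y 0 = - matrix_inv B" and F0: "F 0 = - matrix_inv B"
    and ES: "\<And>i. E (Suc i) = E i ** matrix_inv (mat 1 - Y i ** X i) ** E i"
    and FS: "\<And>i. F (Suc i) = F i ** matrix_inv (mat 1 - X i ** Y i) ** F i"
    and XS: "\<And>i. X (Suc i) = X i + F i ** matrix_inv (mat 1 - X i ** Y i) ** X i ** E i"
    and YS: "\<And>i. Y (Suc i) = Y i + E i ** matrix_inv (mat 1 - Y i ** X i) ** Y i ** F i"
  shows "(\<forall>i. invertible (mat 1 - X i ** Y i) \<and> invertible (mat 1 - Y i ** X i)) \<and>
         (\<forall>k\<ge>1.
            E k = (mat 1 - Y k ** Phi) ** mpow Phi (2^k) \<and> E k \<ge> 0 \<and>
            F k = (mat 1 - X k ** Psi) ** mpow Psi (2^k) \<and> F k \<ge> 0 \<and>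
            nonsing_M_matrix (mat 1 - X k ** Y k) \<and> nonsing_M_matrix (mat 1 - Y k ** X k) \<and>
            Phi \<le> X k \<and> X k \<le> X (k - 1) \<and> X (k - 1) \<le> 0 \<and>
            Psi \<le> Y k \<and> Y k \<le> Y (k - 1) \<and> Y (k - 1) \<le> 0 \<and>
            0 \<le> X k - Phi \<and> X k - Phi \<le> mpow Psi (2^k) ** (- Phi) ** mpow Phi (2^k) \<and>
            0 \<le> Y k - Psi \<and> Y k - Psi \<le> mpow Phi (2^k) ** (- Psi) ** mpow Psi (2^k))"
proof -
  interpret doubling_iteration B C Phi Psi X Y E F
    by unfold_locales (fact hB hBC hBCI hPhi hPsi X0 E0 Y0 F0 ES FS XS YS)+
  have "0 \<le> X k - Phi" "0 \<le> Y k - Psi" for k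
    using iterate_bounds(1,3)[of k] by (simp_all add: matrix_le_iff)
  then show ?thesis
    using X_antimono Y_antimono
    by (simp add: one_minus_products_at E_nonneg F_nonneg iterate_bounds error_bounds
        flip: E_eq F_eq)
qed

end
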